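(* Let $W=\{0,\tfrac13,\tfrac12,\tfrac23\}\subset S^1$. Then $P(W)$ holds.
   Context: Identify $S^1$ with $\mathbb{R}/\mathbb{Z}$. The group $O(2)$ acts on $S^1$ by translations $x\mapsto x+a$ and reflections $x\mapsto -x+2a$. A coloring $c:S^1\to\{R,B\}$ is distinguishing if no non-identity $\gamma\in O(2)$ satisfies $c\circ\gamma=c$. For $W\subset S^1$ with trivial pointwise stabilizer in $O(2)$, $P(W)$ holds if every precoloring $c:S^1\setminus W\to\{R,B\}$ extends to a distinguishing coloring of $S^1$. *)

theory Defs
  imports Complex_Main
begin

text \<open>The circle S^1 = R/Z is modelled by real numbers modulo 1: a point of S^1 is
  represented by any real x, and x, y represent the same point iff frac x = frac y.
  A function on S^1 is a 1-periodic function on the reals.\<close>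

datatype color = R | B

definition on_circle :: "(real \<Rightarrow> 'a) \<Rightarrow> bool" where
  "on_circle f \<longleftrightarrow> (\<forall>x. f (x + 1) = f x)"

text \<open>Elements of O(2) acting on S^1: translations x \<mapsto> x + a and reflections
  x \<mapsto> -x + 2a (the parameter a is taken modulo 1, resp. modulo 1/2).\<close>
datatype o2 = Trans real | Refl real

fun act :: "o2 \<Rightarrow> real \<Rightarrow> real" where
  "act (Trans a) x = x + a"
| "act (Refl a) x = - x + 2 * a"

definition is_identity :: "o2 \<Rightarrow> bool" where
  "is_identity g \<longleftrightarrow> (\<exists>a. g = Trans a \<and> a \<in> \<int>)"

definition distinguishing :: "(real \<Rightarrow> color) \<Rightarrow> bool" where
  "distinguishing c \<longleftrightarrow>
     (\<forall>g. (\<forall>x. c (act g x) = c x) \<longrightarrow> is_identity g)"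

text \<open>W is a subset of S^1 given by representatives; a real x lies (as a point of S^1)
  in W iff frac x \<in> frac ` W.\<close>
definition in_circle_set :: "real \<Rightarrow> real set \<Rightarrow> bool" where
  "in_circle_set x W \<longleftrightarrow> frac x \<in> frac ` W"

definition trivial_pointwise_stabilizer :: "real set \<Rightarrow> bool" where
  "trivial_pointwise_stabilizer W \<longleftrightarrow>
     (\<forall>g. (\<forall>w\<in>W. frac (act g w) = frac w) \<longrightarrow> is_identity g)"

text \<open>A precoloring of S^1 \ W is represented by a coloring
  p of S^1 whose values on W are ignored.\<close>
definition P :: "real set \<Rightarrow> bool" where
  "P W \<longleftrightarrow> trivial_pointwise_stabilizer W \<and>
     (\<forall>p. on_circle p \<longrightarrow>
        (\<exists>c. on_circle c \<and> distinguishing c \<and>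
             (\<forall>x. \<not> in_circle_set x W \<longrightarrow> c x = p x)))"

end

theory Submission
  imports Defs
begin

text \<open>Call the points of $\frac16\mathbb{Z}$ the sixths. Modulo 1 the sixths outside $W$ are only
  $1/6$ and $5/6$, so a precolouring $p$ is extended by keeping $p$ off the sixths and putting a
  pattern $F$ on $\mathbb{Z}/6$ on them, with $F(1)$, $F(5)$ forced. A symmetry of the extension
  that preserves the sixths is a symmetry of $F$ and of $p$ off the sixths; one that moves the
  sixths off themselves transports $F$ onto values of $p$.

  If $p$ off the sixths has a non-integral period among the sixths, any asymmetric pattern works,
  since a symmetry moving the sixths would make $F$ invariant under that period. Otherwise take
  three patterns, no two of them rotations of each other and none mirror-symmetric about a sixth
  where $p$ is. If neither $F$ nor $F$ with its colour at $0 \in W$ swapped yields a distinguishing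
  colouring, the extension by $F$ has a mirror axis off the sixths. Axes of two such patterns
  differing by a sixth would make the patterns rotations of each other, and three axes pairwise
  differing by non-sixths are impossible: alternating reflections in them lead around a closed
  walk off the sixths.\<close>

definition sixths :: "real set" where
  "sixths = range (\<lambda>k::int. of_int k / 6)"

lemma sixthsE:
  assumes "x \<in> sixths" obtains k :: int where "x = of_int k / 6"
  using assms unfolding sixths_def by blast

lemma of_int_div_6_in_sixths [simp]: "of_int k / 6 \<in> sixths"
  unfolding sixths_def by (rule rangeI)

lemma sixths_add: "x \<in> sixths \<Longrightarrow> y \<in> sixths \<Longrightarrow> x + y \<in> sixths"
  by (elim sixthsE) (metis of_int_div_6_in_sixths add_divide_distrib of_int_add)

lemma sixths_minus: "x \<in> sixths \<Longrightarrow> - x \<in> sixths"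
  by (elim sixthsE) (metis of_int_div_6_in_sixths minus_divide_left of_int_minus)

lemma minus_sixths_iff: "- x \<in> sixths \<longleftrightarrow> x \<in> sixths"
  using sixths_minus[of x] sixths_minus[of "- x"] by auto

lemma sixths_diff: "x \<in> sixths \<Longrightarrow> y \<in> sixths \<Longrightarrow> x - y \<in> sixths"
  using sixths_add[of x "- y"] sixths_minus[of y] by simp

lemma add_sixths_iff: "e \<in> sixths \<Longrightarrow> z + e \<in> sixths \<longleftrightarrow> z \<in> sixths"
  using sixths_add[of z e] sixths_diff[of "z + e" e] by auto

lemma diff_sixths_iff: "e \<in> sixths \<Longrightarrow> z - e \<in> sixths \<longleftrightarrow> z \<in> sixths"
  using sixths_diff[of z e] sixths_add[of "z - e" e] by auto

lemma sixths_diff_iff: "e \<in> sixths \<Longrightarrow> e - z \<in> sixths \<longleftrightarrow> z \<in> sixths"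
  using sixths_diff[of e z] sixths_diff[of e "e - z"] by auto

lemma Ints_in_sixths: "x \<in> \<int> \<Longrightarrow> x \<in> sixths"
  by (elim Ints_cases) (metis of_int_div_6_in_sixths of_int_mult of_int_numeral
      nonzero_mult_div_cancel_left zero_neq_numeral)

lemma of_int_div_6_in_Ints_iff: "(of_int j / 6 :: real) \<in> \<int> \<longleftrightarrow> j mod 6 = 0"
proof
  assume "(of_int j / 6 :: real) \<in> \<int>"
  then obtain n where "(of_int j / 6 :: real) = of_int n" by (elim Ints_cases)
  then have "j = 6 * n" by (simp add: field_simps flip: of_int_mult of_int_eq_iff)
  then show "j mod 6 = 0" by simp
next
  assume "j mod 6 = 0"
  then have "(of_int j / 6 :: real) = of_int (j div 6)" by (auto elim!: dvdE simp: mod_eq_0_iff_dvd)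
  then show "(of_int j / 6 :: real) \<in> \<int>" by simp
qed

lemma on_circle_add_Ints:
  assumes "on_circle f" "n \<in> \<int>" shows "f (x + n) = f x"
proof -
  have "f (x + of_int k) = f x" for k :: int
  proof (induction k rule: int_induct[where k = 0])
    case (step1 i)
    then show ?case using assms(1) unfolding on_circle_def by (metis add.assoc of_int_add of_int_1)
  next
    case (step2 i)
    then show ?case using assms(1) unfolding on_circle_def by (metis diff_add_cancel add.assoc of_int_1 of_int_diff)
  qed simp
  then show ?thesis using assms(2) by (auto elim: Ints_cases)
qed

definition patched :: "(real \<Rightarrow> 'a) \<Rightarrow> (int \<Rightarrow> 'a) \<Rightarrow> real \<Rightarrow> 'a" where
  "patched p F x = (if x \<in> sixths then F (\<lfloor>6 * x\<rfloor> mod 6) else p x)"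

definition fits_precoloring :: "(real \<Rightarrow> 'a) \<Rightarrow> (int \<Rightarrow> 'a) \<Rightarrow> bool" where
  "fits_precoloring p F \<longleftrightarrow> F 1 = p (1/6) \<and> F 5 = p (5/6)"

lemma patched_sixth [simp]: "patched p F (of_int k / 6) = F (k mod 6)"
  by (simp add: patched_def)

lemma patched_off_sixths: "x \<notin> sixths \<Longrightarrow> patched p F x = p x"
  by (simp add: patched_def)

lemma on_circle_patched:
  assumes "on_circle p" shows "on_circle (patched p F)"
  unfolding on_circle_def
proof
  fix x
  show "patched p F (x + 1) = patched p F x"
  proof (cases "x \<in> sixths")
    case True
    then obtain k where k: "x = of_int k / 6" by (rule sixthsE)
    then have x1: "x + 1 = of_int (k + 6) / 6" by simp
    have "patched p F (x + 1) = F ((k + 6) mod 6)" unfolding x1 by (rule patched_sixth)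
    moreover have "patched p F x = F (k mod 6)" unfolding k by (rule patched_sixth)
    ultimately show ?thesis by simp
  next
    case False
    then have "x + 1 \<notin> sixths" using add_sixths_iff[OF Ints_in_sixths[OF Ints_1]] by simp
    then show ?thesis using False assms by (simp add: patched_off_sixths on_circle_def)
  qed
qed

lemma patched_eq_off_W:
  assumes p: "on_circle p" and F: "fits_precoloring p F"
    and x: "\<not> in_circle_set x {0, 1/3, 1/2, 2/3}"
  shows "patched p F x = p x"
proof (cases "x \<in> sixths")
  case True
  then obtain k where k: "x = of_int k / 6" by (rule sixthsE)
  define r where "r = k mod 6"
  have x_r: "x = of_int r / 6 + of_int (k div 6)"
    unfolding k r_def
    by (simp add: field_simps) (metis mod_mult_div_eq of_int_add of_int_mult of_int_numeral)
  have "r \<in> {0..5}" unfolding r_def by simp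
  moreover have "r \<notin> {0, 2, 3, 4}"
  proof
    assume "r \<in> {0, 2, 3, 4}"
    then have "of_int r / 6 \<in> ({0, 1/3, 1/2, 2/3} :: real set)" by auto
    moreover have "frac x = frac (of_int r / 6)" using x_r by simp
    ultimately show False using x unfolding in_circle_set_def by blast
  qed
  ultimately have "r = 1 \<or> r = 5" by auto
  moreover have "p x = p (of_int r / 6)" using x_r on_circle_add_Ints[OF p] by simp
  moreover have "patched p F x = F r" unfolding k r_def by (rule patched_sixth)
  ultimately show ?thesis using F unfolding fits_precoloring_def by auto
qed (simp add: patched_off_sixths)

lemma trivial_pointwise_stabilizer_W: "trivial_pointwise_stabilizer {0, 1/3, 1/2, 2/3}"
  unfolding trivial_pointwise_stabilizer_def
proof (intro allI impI)
  fix g assume fix_W: "\<forall>w\<in>{0, 1/3, 1/2, 2/3::real}. frac (act g w) = frac w"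
  show "is_identity g"
  proof (cases g)
    case (Trans a)
    then have "a \<in> \<int>" using fix_W by simp
    then show ?thesis using Trans by (simp add: is_identity_def)
  next
    case (Refl a)
    from fix_W Refl have "2 * a \<in> \<int>" by simp
    then have "frac (- (1/3) + 2 * a) = frac (- (1/3) :: real)"
      by (metis add.commute frac_add_int_left)
    also have "\<dots> = 2/3"
      unfolding frac_unique_iff by (simp add: diff_divide_distrib [symmetric])
    finally have "frac (- (1/3) + 2 * a) = 2/3" .
    moreover from fix_W Refl have "frac (- (1/3) + 2 * a) = frac (1/3 :: real)" by auto
    moreover have "frac (1/3 :: real) = 1/3" by (simp add: frac_unique_iff)
    ultimately show ?thesis by simp
  qed
qed

definition rot_invariant :: "(int \<Rightarrow> 'a) \<Rightarrow> int \<Rightarrow> bool" where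
  "rot_invariant F j \<longleftrightarrow> (\<forall>k. F ((k + j) mod 6) = F (k mod 6))"

definition refl_invariant :: "(int \<Rightarrow> 'a) \<Rightarrow> int \<Rightarrow> bool" where
  "refl_invariant F m \<longleftrightarrow> (\<forall>k. F ((m - k) mod 6) = F (k mod 6))"

definition rotation_related :: "(int \<Rightarrow> 'a) \<Rightarrow> (int \<Rightarrow> 'a) \<Rightarrow> bool" where
  "rotation_related F G \<longleftrightarrow> (\<exists>s. \<forall>k. G (k mod 6) = F ((k - s) mod 6))"

definition periodic_off_sixths :: "(real \<Rightarrow> 'a) \<Rightarrow> bool" where
  "periodic_off_sixths p \<longleftrightarrow>
     (\<exists>v. v \<in> sixths \<and> v \<notin> \<int> \<and> (\<forall>x. x \<notin> sixths \<longrightarrow> p (x + v) = p x))"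

definition mirror_off_sixths :: "(real \<Rightarrow> 'a) \<Rightarrow> real \<Rightarrow> bool" where
  "mirror_off_sixths p b \<longleftrightarrow> (\<forall>x. x \<notin> sixths \<longrightarrow> p (b - x) = p x)"

lemma sixth_add: "of_int k / 6 + of_int j / 6 = (of_int (k + j) / 6 :: real)"
  by (simp add: add_divide_distrib)

lemma sixth_diff: "of_int m / 6 - of_int k / 6 = (of_int (m - k) / 6 :: real)"
  by (simp add: diff_divide_distrib)

lemma patched_translation_off_sixths:
  assumes "a \<in> sixths" "\<forall>x. patched p F (x + a) = patched p F x"
  shows "\<forall>x. x \<notin> sixths \<longrightarrow> p (x + a) = p x"
proof (intro allI impI)
  fix x assume x: "x \<notin> sixths"
  then have "x + a \<notin> sixths" using add_sixths_iff[OF assms(1)] by simp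
  then show "p (x + a) = p x" using assms(2) x by (metis patched_off_sixths)
qed

lemma patched_translation_rot_invariant:
  assumes "\<forall>x. patched p F (x + of_int j / 6) = patched p F x"
  shows "rot_invariant F j"
  unfolding rot_invariant_def
proof
  fix k
  have "patched p F (of_int k / 6 + of_int j / 6) = patched p F (of_int k / 6)" using assms by blast
  then show "F ((k + j) mod 6) = F (k mod 6)" by (simp only: sixth_add patched_sixth)
qed

lemma patched_reflection_mirror_off_sixths:
  assumes "b \<in> sixths" "\<forall>x. patched p F (b - x) = patched p F x"
  shows "mirror_off_sixths p b"
  unfolding mirror_off_sixths_def
proof (intro allI impI)
  fix x assume x: "x \<notin> sixths"
  then have "b - x \<notin> sixths" using sixths_diff_iff[OF assms(1)] by simp
  then show "p (b - x) = p x" using assms(2) x by (metis patched_off_sixths)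
qed

lemma patched_reflection_refl_invariant:
  assumes "\<forall>x. patched p F (of_int m / 6 - x) = patched p F x"
  shows "refl_invariant F m"
  unfolding refl_invariant_def
proof
  fix k
  have "patched p F (of_int m / 6 - of_int k / 6) = patched p F (of_int k / 6)" using assms by blast
  then show "F ((m - k) mod 6) = F (k mod 6)" by (simp only: sixth_diff patched_sixth)
qed

lemma pattern_eq_mirror_image:
  assumes "b \<notin> sixths" "\<forall>x. patched p F (b - x) = patched p F x"
  shows "F (k mod 6) = p (b - of_int k / 6)"
proof -
  have "b - of_int k / 6 \<notin> sixths"
    using assms(1) diff_sixths_iff[OF of_int_div_6_in_sixths] by simp
  then have "patched p F (b - of_int k / 6) = p (b - of_int k / 6)" by (rule patched_off_sixths)
  moreover have "patched p F (b - of_int k / 6) = patched p F (of_int k / 6)" using assms(2) by blast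
  ultimately show ?thesis by simp
qed

text \<open>A symmetry moving the sixths off themselves identifies the pattern with values of $p$ off
  the sixths, so symmetries of $p$ there are inherited by the pattern.\<close>

lemma rot_invariant_of_skew_reflection:
  assumes per: "\<forall>x. x \<notin> sixths \<longrightarrow> p (x + of_int j / 6) = p x"
    and nb: "b \<notin> sixths" and sy: "\<forall>x. patched p F (b - x) = patched p F x"
  shows "rot_invariant F j"
  unfolding rot_invariant_def
proof
  fix k
  define z where "z = (of_int k / 6 :: real)"
  define v where "v = (of_int j / 6 :: real)"
  have hz: "z \<in> sixths" "v \<in> sixths" unfolding z_def v_def by (rule of_int_div_6_in_sixths)+
  have n1: "b - z \<notin> sixths" using nb diff_sixths_iff[OF hz(1)] by simp
  have n2: "b - z - v \<notin> sixths" using n1 diff_sixths_iff[OF hz(2)] by simp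
  have "patched p F z = patched p F (b - z)" using sy by simp
  also have "\<dots> = p (b - z)" using n1 by (simp add: patched_off_sixths)
  also have "\<dots> = p ((b - z - v) + v)" by simp
  also have "\<dots> = p (b - z - v)" using per n2 unfolding v_def by blast
  also have "\<dots> = patched p F (b - z - v)" using n2 by (simp add: patched_off_sixths)
  also have "\<dots> = patched p F (b - (z + v))" by (simp add: algebra_simps)
  also have "\<dots> = patched p F (z + v)" using sy by blast
  finally have "patched p F z = patched p F (z + v)" .
  then show "F ((k + j) mod 6) = F (k mod 6)" unfolding z_def v_def by (simp only: sixth_add patched_sixth)
qed

lemma rot_invariant_of_skew_translation:
  assumes per: "\<forall>x. x \<notin> sixths \<longrightarrow> p (x + of_int j / 6) = p x"
    and nt: "t \<notin> sixths" and sy: "\<forall>x. patched p F (x + t) = patched p F x"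
  shows "rot_invariant F j"
  unfolding rot_invariant_def
proof
  fix k
  define z where "z = (of_int k / 6 :: real)"
  define v where "v = (of_int j / 6 :: real)"
  have hz: "z \<in> sixths" "v \<in> sixths" unfolding z_def v_def by (rule of_int_div_6_in_sixths)+
  have n1: "t + z \<notin> sixths" using nt add_sixths_iff[OF hz(1)] by simp
  have n2: "t + z + v \<notin> sixths" using n1 add_sixths_iff[OF hz(2)] by simp
  have "patched p F z = patched p F (z + t)" using sy by simp
  also have "\<dots> = p (z + t)" using n1 by (simp add: patched_off_sixths add.commute)
  also have "\<dots> = p ((z + t) + v)" using per n1 unfolding v_def by (simp add: add.commute)
  also have "\<dots> = patched p F ((z + v) + t)" using n2 by (simp add: patched_off_sixths algebra_simps)
  also have "\<dots> = patched p F (z + v)" using sy by blast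
  finally have "patched p F z = patched p F (z + v)" .
  then show "F ((k + j) mod 6) = F (k mod 6)" unfolding z_def v_def by (simp only: sixth_add patched_sixth)
qed

lemma refl_invariant_of_skew_translation:
  assumes rs: "mirror_off_sixths p (of_int m / 6)"
    and nt: "t \<notin> sixths" and sy: "\<forall>x. patched p F (x + t) = patched p F x"
  shows "refl_invariant F m"
  unfolding refl_invariant_def
proof
  fix k
  define z where "z = (of_int k / 6 :: real)"
  define b where "b = (of_int m / 6 :: real)"
  have hz: "z \<in> sixths" "b \<in> sixths" unfolding z_def b_def by (rule of_int_div_6_in_sixths)+
  have n1: "z + t \<notin> sixths" using nt add_sixths_iff[OF hz(1)] by (simp add: add.commute)
  have n2: "b - z - t \<notin> sixths" using nt sixths_diff_iff[OF hz(2), of "z + t"] add_sixths_iff[OF hz(1), of t]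
    by (simp add: add.commute diff_diff_eq)
  have "patched p F z = patched p F (z + t)" using sy by simp
  also have "\<dots> = p (z + t)" using n1 by (simp add: patched_off_sixths)
  also have "\<dots> = p (b - (z + t))" using rs n1 unfolding mirror_off_sixths_def b_def by simp
  also have "\<dots> = patched p F (b - z - t)" using n2 by (simp add: patched_off_sixths diff_diff_eq)
  also have "\<dots> = patched p F (b - z)" using sy[rule_format, of "b - z - t"] by simp
  finally have "patched p F z = patched p F (b - z)" .
  then show "F ((m - k) mod 6) = F (k mod 6)" unfolding z_def b_def by (simp only: sixth_diff patched_sixth)
qed

lemma act_Refl_eq_diff: "act (Refl a) x = 2 * a - x"
  by simp

lemma patched_symmetry_cases [consumes 2]:
  assumes sym: "\<forall>x. patched p F (act g x) = patched p F x" and g: "\<not> is_identity g"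
  obtains (sixth_translation) j where "j mod 6 \<noteq> 0" "rot_invariant F j" "periodic_off_sixths p"
  | (sixth_reflection) m where "refl_invariant F m" "mirror_off_sixths p (of_int m / 6)"
  | (skew_translation) t where "t \<notin> sixths" "\<forall>x. patched p F (x + t) = patched p F x"
  | (skew_reflection) b where "b \<notin> sixths" "\<forall>x. patched p F (b - x) = patched p F x"
proof (cases g)
  case (Trans a)
  have inv: "\<forall>x. patched p F (x + a) = patched p F x" using sym Trans by simp
  show ?thesis
  proof (cases "a \<in> sixths")
    case True
    then obtain j where j: "a = of_int j / 6" by (rule sixthsE)
    have "a \<notin> \<int>" using g Trans by (simp add: is_identity_def)
    then have "j mod 6 \<noteq> 0" unfolding j of_int_div_6_in_Ints_iff .
    moreover have "rot_invariant F j" using inv unfolding j by (rule patched_translation_rot_invariant)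
    moreover have "periodic_off_sixths p"
      unfolding periodic_off_sixths_def
      using True \<open>a \<notin> \<int>\<close> patched_translation_off_sixths[OF True inv] by blast
    ultimately show ?thesis by (rule sixth_translation)
  next
    case False
    then show ?thesis using inv by (rule skew_translation)
  qed
next
  case (Refl a)
  have inv: "\<forall>x. patched p F (2 * a - x) = patched p F x"
    using sym Refl by (simp add: act_Refl_eq_diff del: act.simps)
  show ?thesis
  proof (cases "2 * a \<in> sixths")
    case True
    then obtain m where m: "2 * a = of_int m / 6" by (rule sixthsE)
    have "refl_invariant F m" using inv unfolding m by (rule patched_reflection_refl_invariant)
    moreover have "mirror_off_sixths p (of_int m / 6)"
      using patched_reflection_mirror_off_sixths[OF True inv] m by simp
    ultimately show ?thesis by (rule sixth_reflection)
  next
    case False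
    then show ?thesis using inv by (rule skew_reflection)
  qed
qed

lemma distinguishing_if_periodic:
  assumes periodic: "periodic_off_sixths p"
    and no_rot: "\<And>j. rot_invariant F j \<Longrightarrow> j mod 6 = 0"
    and no_refl: "\<And>m. \<not> refl_invariant F m"
  shows "distinguishing (patched p F)"
  unfolding distinguishing_def
proof (intro allI impI)
  fix g assume sym: "\<forall>x. patched p F (act g x) = patched p F x"
  obtain v where v: "v \<in> sixths" "v \<notin> \<int>" "\<forall>x. x \<notin> sixths \<longrightarrow> p (x + v) = p x"
    using periodic unfolding periodic_off_sixths_def by blast
  from v(1) obtain j where j: "v = of_int j / 6" by (rule sixthsE)
  have j_nonzero: "j mod 6 \<noteq> 0" using v(2) unfolding j of_int_div_6_in_Ints_iff .
  have per: "\<forall>x. x \<notin> sixths \<longrightarrow> p (x + of_int j / 6) = p x" using v(3) unfolding j .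
  show "is_identity g"
  proof (rule ccontr)
    assume "\<not> is_identity g"
    with sym show False
    proof (cases rule: patched_symmetry_cases)
      case (sixth_translation i)
      then show False using no_rot by simp
    next
      case (sixth_reflection m)
      then show False using no_refl by simp
    next
      case (skew_translation t)
      then show False using no_rot[OF rot_invariant_of_skew_translation[OF per]] j_nonzero by simp
    next
      case (skew_reflection b)
      then show False using no_rot[OF rot_invariant_of_skew_reflection[OF per]] j_nonzero by simp
    qed
  qed
qed

lemma no_translation_if_changed_on_Ints:
  assumes c2: "on_circle c2" and agree: "\<And>x. x \<notin> \<int> \<Longrightarrow> c2 x = c1 x" and differ: "c2 0 \<noteq> c1 0"
    and per: "\<And>x. c1 (x + t) = c1 x" and t: "t \<notin> \<int>"
    and a: "a \<notin> \<int>" and inv: "\<And>x. c2 (x + a) = c2 x"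
  shows False
proof -
  have "c2 0 = c1 (a + t)" using inv[of 0] agree[OF a] per[of a] by simp
  moreover have "c1 (a + t) = c1 0"
  proof (cases "a + t \<in> \<int>")
    case True
    have "c1 (a + t) = c2 a" using inv[of 0] agree[OF a] per[of a] by simp
    also have "\<dots> = c2 (- t + (a + t))" by simp
    also have "\<dots> = c2 (- t)" using on_circle_add_Ints[OF c2 True] .
    also have "\<dots> = c1 0" using agree[of "- t"] t per[of "- t"] by (simp add: minus_in_Ints_iff)
    finally show ?thesis .
  next
    case False
    then show ?thesis using agree[OF False] inv[of t] agree[OF t] per[of 0] by (simp add: add.commute)
  qed
  ultimately show False using differ by simp
qed

lemma no_reflection_if_changed_on_Ints:
  assumes c1: "on_circle c1" and agree: "\<And>x. x \<notin> \<int> \<Longrightarrow> c2 x = c1 x" and differ: "c2 0 \<noteq> c1 0"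
    and per: "\<And>x. c1 (x + t) = c1 x" and t: "t \<notin> \<int>"
    and b: "b \<notin> \<int>" and inv: "\<And>x. c2 (b - x) = c2 x"
  shows False
proof -
  have "c2 0 = c1 b" using inv[of 0] agree[OF b] by simp
  moreover have "c1 b = c1 0"
  proof (cases "b - t \<in> \<int>")
    case True
    have "c1 b = c1 (t + (b - t))" by simp
    also have "\<dots> = c1 t" using on_circle_add_Ints[OF c1 True] .
    finally show ?thesis using per[of 0] by simp
  next
    case False
    then show ?thesis using per[of "b - t"] agree[OF False] inv[of t] agree[OF t] per[of 0] by simp
  qed
  ultimately show False using differ by simp
qed

fun swap_color :: "color \<Rightarrow> color" where
  "swap_color R = B"
| "swap_color B = R"

definition recolor_zero :: "(int \<Rightarrow> color) \<Rightarrow> int \<Rightarrow> color" where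
  "recolor_zero F k = (if k mod 6 = 0 then swap_color (F k) else F k)"

lemma recolor_zero_simps [simp]: "recolor_zero F 1 = F 1" "recolor_zero F 5 = F 5"
  by (simp_all add: recolor_zero_def)

lemma patched_recolor_zero_off_Ints:
  assumes "x \<notin> \<int>" shows "patched p (recolor_zero F) x = patched p F x"
proof (cases "x \<in> sixths")
  case True
  then obtain k where k: "x = of_int k / 6" by (rule sixthsE)
  have "k mod 6 \<noteq> 0" using assms unfolding k of_int_div_6_in_Ints_iff .
  then show ?thesis unfolding k by (simp add: recolor_zero_def)
qed (simp add: patched_off_sixths)

lemma patched_recolor_zero_at_zero: "patched p (recolor_zero F) 0 \<noteq> patched p F 0"
  using patched_sixth[of p _ 0] by (cases "F 0") (simp_all add: recolor_zero_def)

lemma distinguishing_recolor_zero: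
  assumes p: "on_circle p" and not_periodic: "\<not> periodic_off_sixths p"
    and no_mirror: "\<And>m. \<not> mirror_off_sixths p (of_int m / 6)"
    and t: "t \<notin> sixths" and per: "\<forall>x. patched p F (x + t) = patched p F x"
  shows "distinguishing (patched p (recolor_zero F))"
  unfolding distinguishing_def
proof (intro allI impI)
  fix g assume sym: "\<forall>x. patched p (recolor_zero F) (act g x) = patched p (recolor_zero F) x"
  have not_Int: "x \<notin> \<int>" if "x \<notin> sixths" for x using that Ints_in_sixths by blast
  note changed = patched_recolor_zero_off_Ints[where p = p and F = F]
    patched_recolor_zero_at_zero[where p = p and F = F]
  show "is_identity g"
  proof (rule ccontr)
    assume "\<not> is_identity g"
    with sym show False
    proof (cases rule: patched_symmetry_cases)
      case (sixth_translation j)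
      then show False using not_periodic by blast
    next
      case (sixth_reflection m)
      then show False using no_mirror by blast
    next
      case (skew_translation a)
      then show False
        by (intro no_translation_if_changed_on_Ints[OF on_circle_patched[OF p] changed,
              of t a]) (simp_all add: per not_Int t)
    next
      case (skew_reflection b)
      then show False
        by (intro no_reflection_if_changed_on_Ints[OF on_circle_patched[OF p] changed,
              of t b]) (simp_all add: per not_Int t)
    qed
  qed
qed

lemma skew_axis_if_not_distinguishing:
  assumes p: "on_circle p" and not_periodic: "\<not> periodic_off_sixths p"
    and no_refl: "\<And>m. mirror_off_sixths p (of_int m / 6) \<Longrightarrow> \<not> refl_invariant F m"
    and "\<not> distinguishing (patched p F)" and "\<not> distinguishing (patched p (recolor_zero F))"
  obtains b where "b \<notin> sixths" "\<forall>x. patched p F (b - x) = patched p F x"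
proof -
  obtain g where sym: "\<forall>x. patched p F (act g x) = patched p F x" and "\<not> is_identity g"
    using assms(4) unfolding distinguishing_def by blast
  then show ?thesis
  proof (cases rule: patched_symmetry_cases)
    case (sixth_translation j)
    then show ?thesis using not_periodic by blast
  next
    case (sixth_reflection m)
    then show ?thesis using no_refl by blast
  next
    case (skew_translation t)
    show ?thesis
    proof (cases "\<exists>m. mirror_off_sixths p (of_int m / 6)")
      case True
      then show ?thesis using no_refl refl_invariant_of_skew_translation skew_translation by blast
    next
      case False
      then show ?thesis using distinguishing_recolor_zero[OF p not_periodic _ skew_translation] assms(5)
        by blast
    qed
  next
    case (skew_reflection b)
    then show ?thesis by (rule that)
  qed
qed

text \<open>Reflecting $e$ successively in $b_2, b_1, b_3, b_2, b_1, b_3$ returns to $e$; every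
  intermediate point lies off the sixths, where all three colourings agree with $p$, so the walk
  carries the colour of $c_2$ at $e$ to that of $c_3$ at $e$.\<close>

lemma mirror_walk:
  assumes s1: "\<forall>x. c1 (b1 - x) = c1 x" and s2: "\<forall>x. c2 (b2 - x) = c2 x"
    and s3: "\<forall>x. c3 (b3 - x) = c3 x"
    and a1: "\<forall>x. x \<notin> sixths \<longrightarrow> c1 x = p x" and a2: "\<forall>x. x \<notin> sixths \<longrightarrow> c2 x = p x"
    and a3: "\<forall>x. x \<notin> sixths \<longrightarrow> c3 x = p x"
    and "b2 \<notin> sixths" "b1 - b2 \<notin> sixths" "b3 - b1 + b2 \<notin> sixths" "b1 - b3 \<notin> sixths" "b3 \<notin> sixths"
    and e: "e \<in> sixths"
  shows "c3 e = c2 e"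
proof -
  define y1 where "y1 = b2 - e"
  define y2 where "y2 = (b1 - b2) + e"
  define y3 where "y3 = (b3 - b1 + b2) - e"
  define y4 where "y4 = (b1 - b3) + e"
  define y5 where "y5 = b3 - e"
  have off: "y1 \<notin> sixths" "y2 \<notin> sixths" "y3 \<notin> sixths" "y4 \<notin> sixths" "y5 \<notin> sixths"
    unfolding y1_def y2_def y3_def y4_def y5_def
    using assms(7-11) diff_sixths_iff[OF e] add_sixths_iff[OF e] by simp_all
  have steps: "b1 - y1 = y2" "b3 - y2 = y3" "b2 - y3 = y4" "b1 - y4 = y5" "b3 - y5 = e"
    unfolding y1_def y2_def y3_def y4_def y5_def by simp_all
  have "c2 e = c2 y1" unfolding y1_def using s2 by simp
  also have "\<dots> = c1 y1" using a1 a2 off by simp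
  also have "\<dots> = c1 y2" using s1[rule_format, of y1] steps by simp
  also have "\<dots> = c3 y2" using a1 a3 off by simp
  also have "\<dots> = c3 y3" using s3[rule_format, of y2] steps by simp
  also have "\<dots> = c2 y3" using a2 a3 off by simp
  also have "\<dots> = c2 y4" using s2[rule_format, of y3] steps by simp
  also have "\<dots> = c1 y4" using a1 a2 off by simp
  also have "\<dots> = c1 y5" using s1[rule_format, of y4] steps by simp
  also have "\<dots> = c3 y5" using a1 a3 off by simp
  also have "\<dots> = c3 e" using s3[rule_format, of y5] steps by simp
  finally show ?thesis by simp
qed

lemma sixths_diff_of_halves:
  assumes "2 * x \<in> sixths" "x \<notin> sixths" "2 * y \<in> sixths" "y \<notin> sixths"
  shows "x - y \<in> sixths"
proof -
  have odd: "odd a" if "2 * z = of_int a / 6" "z \<notin> sixths" for z :: real and a :: int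
  proof
    assume "even a"
    then obtain a' where "a = 2 * a'" by blast
    then have "z = of_int a' / 6" using that(1) by simp
    then show False using that(2) by (metis of_int_div_6_in_sixths)
  qed
  obtain a :: int where a: "2 * x = of_int a / 6" using assms(1) by (rule sixthsE)
  obtain b :: int where b: "2 * y = of_int b / 6" using assms(3) by (rule sixthsE)
  have "even (a - b)" using odd[OF a assms(2)] odd[OF b assms(4)] by simp
  then obtain d where d: "a - b = 2 * d" by blast
  have "x - y = (of_int a / 6 - of_int b / 6) / 2" using a b by simp
  also have "\<dots> = of_int d / 6" by (simp add: sixth_diff d)
  finally show ?thesis by (metis of_int_div_6_in_sixths)
qed

lemma no_three_skew_axes:
  assumes s1: "\<forall>x. c1 (b1 - x) = c1 x" and s2: "\<forall>x. c2 (b2 - x) = c2 x"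
    and s3: "\<forall>x. c3 (b3 - x) = c3 x"
    and a1: "\<forall>x. x \<notin> sixths \<longrightarrow> c1 x = p x" and a2: "\<forall>x. x \<notin> sixths \<longrightarrow> c2 x = p x"
    and a3: "\<forall>x. x \<notin> sixths \<longrightarrow> c3 x = p x"
    and n1: "b1 \<notin> sixths" and n2: "b2 \<notin> sixths" and n3: "b3 \<notin> sixths"
    and n12: "b1 - b2 \<notin> sixths" and n13: "b1 - b3 \<notin> sixths" and n23: "b2 - b3 \<notin> sixths"
    and d12: "\<exists>e\<in>sixths. c1 e \<noteq> c2 e" and d13: "\<exists>e\<in>sixths. c1 e \<noteq> c3 e"
    and d23: "\<exists>e\<in>sixths. c2 e \<noteq> c3 e"
  shows False
proof -
  have n21: "b2 - b1 \<notin> sixths" using n12 minus_sixths_iff[of "b1 - b2"] by simp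
  have n31: "b3 - b1 \<notin> sixths" using n13 minus_sixths_iff[of "b1 - b3"] by simp
  have n32: "b3 - b2 \<notin> sixths" using n23 minus_sixths_iff[of "b2 - b3"] by simp
  have A: "b3 - b1 + b2 \<in> sixths"
  proof (rule ccontr)
    assume off: "b3 - b1 + b2 \<notin> sixths"
    from d23 obtain e where "e \<in> sixths" "c2 e \<noteq> c3 e" by blast
    then show False using mirror_walk[OF s1 s2 s3 a1 a2 a3 n2 n12 off n13 n3] by simp
  qed
  have B: "b3 - b2 + b1 \<in> sixths"
  proof (rule ccontr)
    assume off: "b3 - b2 + b1 \<notin> sixths"
    from d13 obtain e where "e \<in> sixths" "c1 e \<noteq> c3 e" by blast
    then show False using mirror_walk[OF s2 s1 s3 a2 a1 a3 n1 n21 off n23 n3] by simp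
  qed
  have C: "b2 - b3 + b1 \<in> sixths"
  proof (rule ccontr)
    assume off: "b2 - b3 + b1 \<notin> sixths"
    from d12 obtain e where "e \<in> sixths" "c1 e \<noteq> c2 e" by blast
    then show False using mirror_walk[OF s3 s1 s2 a3 a1 a2 n1 n31 off n32 n2] by simp
  qed
  have "2 * b3 \<in> sixths" using sixths_add[OF A B] by (simp add: algebra_simps)
  moreover have "2 * b2 \<in> sixths" using sixths_add[OF A C] by (simp add: algebra_simps)
  ultimately have "b2 - b3 \<in> sixths" using sixths_diff_of_halves n2 n3 by simp
  then show False using n23 by simp
qed

lemma skew_axes_diff_not_in_sixths:
  assumes "\<not> rotation_related F G"
    and F: "b \<notin> sixths" "\<forall>x. patched p F (b - x) = patched p F x"
    and G: "c \<notin> sixths" "\<forall>x. patched p G (c - x) = patched p G x"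
  shows "b - c \<notin> sixths"
proof
  assume "b - c \<in> sixths"
  then obtain m where "b - c = of_int m / 6" by (rule sixthsE)
  then have m: "c = b - of_int m / 6" by simp
  have "G (k mod 6) = F ((k + m) mod 6)" for k
  proof -
    have "G (k mod 6) = p (c - of_int k / 6)" by (rule pattern_eq_mirror_image[OF G])
    also have "c - of_int k / 6 = b - of_int (k + m) / 6" using m by (simp add: field_simps)
    also have "p \<dots> = F ((k + m) mod 6)" by (rule pattern_eq_mirror_image[OF F, symmetric])
    finally show ?thesis .
  qed
  then have "rotation_related F G" unfolding rotation_related_def by (intro exI[of _ "- m"]) simp
  then show False using assms(1) by contradiction
qed

lemma patched_differ_at_sixth:
  assumes "\<not> rotation_related F G" shows "\<exists>e\<in>sixths. patched p F e \<noteq> patched p G e"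
proof -
  have "\<not> (\<forall>k. G (k mod 6) = F ((k - 0) mod 6))" using assms unfolding rotation_related_def by blast
  then obtain k where "G (k mod 6) \<noteq> F (k mod 6)" by auto
  then have "patched p F (of_int k / 6) \<noteq> patched p G (of_int k / 6)" by simp
  then show ?thesis using of_int_div_6_in_sixths by blast
qed

lemma distinguishing_among_three:
  assumes p: "on_circle p" and not_periodic: "\<not> periodic_off_sixths p"
    and fits: "fits_precoloring p F1" "fits_precoloring p F2" "fits_precoloring p F3"
    and r12: "\<not> rotation_related F1 F2" and r13: "\<not> rotation_related F1 F3"
    and r23: "\<not> rotation_related F2 F3"
    and no_refl: "\<And>F m. F \<in> {F1, F2, F3} \<Longrightarrow> mirror_off_sixths p (of_int m / 6) \<Longrightarrow> \<not> refl_invariant F m"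
  shows "\<exists>F. fits_precoloring p F \<and> distinguishing (patched p F)"
proof (rule ccontr)
  assume none: "\<not> ?thesis"
  have axis: "\<exists>b. b \<notin> sixths \<and> (\<forall>x. patched p F (b - x) = patched p F x)"
    if F: "F \<in> {F1, F2, F3}" and fit: "fits_precoloring p F" for F
  proof -
    have nd: "\<not> distinguishing (patched p F)" using none fit by blast
    have "fits_precoloring p (recolor_zero F)" using fit by (simp add: fits_precoloring_def)
    then have nd_recolored: "\<not> distinguishing (patched p (recolor_zero F))" using none by blast
    show ?thesis
      using skew_axis_if_not_distinguishing[OF p not_periodic no_refl[OF F] nd nd_recolored] by blast
  qed
  obtain b1 where b1: "b1 \<notin> sixths" "\<forall>x. patched p F1 (b1 - x) = patched p F1 x"
    using axis fits(1) by blast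
  obtain b2 where b2: "b2 \<notin> sixths" "\<forall>x. patched p F2 (b2 - x) = patched p F2 x"
    using axis fits(2) by blast
  obtain b3 where b3: "b3 \<notin> sixths" "\<forall>x. patched p F3 (b3 - x) = patched p F3 x"
    using axis fits(3) by blast
  have off: "\<And>F. \<forall>x. x \<notin> sixths \<longrightarrow> patched p F x = p x" by (simp add: patched_off_sixths)
  show False
    by (rule no_three_skew_axes[OF b1(2) b2(2) b3(2) off off off b1(1) b2(1) b3(1)
          skew_axes_diff_not_in_sixths[OF r12 b1 b2] skew_axes_diff_not_in_sixths[OF r13 b1 b3]
          skew_axes_diff_not_in_sixths[OF r23 b2 b3]
          patched_differ_at_sixth[OF r12] patched_differ_at_sixth[OF r13] patched_differ_at_sixth[OF r23]])
qed

lemma mirror_off_sixths_unique_mod_6: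
  assumes not_periodic: "\<not> periodic_off_sixths p"
    and m: "mirror_off_sixths p (of_int m / 6)" and n: "mirror_off_sixths p (of_int n / 6)"
  shows "m mod 6 = n mod 6"
proof (rule ccontr)
  assume "m mod 6 \<noteq> n mod 6"
  then have "(m - n) mod 6 \<noteq> 0" by (simp add: mod_eq_dvd_iff flip: dvd_eq_mod_eq_0)
  then have "(of_int (m - n) / 6 :: real) \<notin> \<int>" unfolding of_int_div_6_in_Ints_iff .
  moreover have "p (x + of_int (m - n) / 6) = p x" if x: "x \<notin> sixths" for x
  proof -
    have y: "of_int n / 6 - x \<notin> sixths" using x sixths_diff_iff[OF of_int_div_6_in_sixths] by blast
    have "x + of_int (m - n) / 6 = of_int m / 6 - (of_int n / 6 - x)" by (simp add: field_simps)
    also have "p \<dots> = p (of_int n / 6 - x)" using m y unfolding mirror_off_sixths_def by blast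
    also have "\<dots> = p x" using n x unfolding mirror_off_sixths_def by blast
    finally show ?thesis .
  qed
  ultimately have "periodic_off_sixths p"
    unfolding periodic_off_sixths_def using of_int_div_6_in_sixths by blast
  then show False using not_periodic by contradiction
qed

text \<open>Decidable forms of the symmetry conditions, checked on concrete patterns by simplification.\<close>

definition pattern6 :: "'a \<Rightarrow> 'a \<Rightarrow> 'a \<Rightarrow> 'a \<Rightarrow> 'a \<Rightarrow> 'a \<Rightarrow> int \<Rightarrow> 'a" where
  "pattern6 a0 a1 a2 a3 a4 a5 k = (if k mod 6 = 0 then a0 else if k mod 6 = 1 then a1 else
     if k mod 6 = 2 then a2 else if k mod 6 = 3 then a3 else if k mod 6 = 4 then a4 else a5)"

definition breaks_rot :: "(int \<Rightarrow> 'a) \<Rightarrow> int \<Rightarrow> bool" where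
  "breaks_rot F j \<longleftrightarrow> (\<exists>k\<in>{0,1,2,3,4,5}. F ((k + j) mod 6) \<noteq> F k)"

definition breaks_refl :: "(int \<Rightarrow> 'a) \<Rightarrow> int \<Rightarrow> bool" where
  "breaks_refl F m \<longleftrightarrow> (\<exists>k\<in>{0,1,2,3,4,5}. F ((m - k) mod 6) \<noteq> F k)"

definition not_rotation6 :: "(int \<Rightarrow> 'a) \<Rightarrow> (int \<Rightarrow> 'a) \<Rightarrow> bool" where
  "not_rotation6 F G \<longleftrightarrow> (\<forall>s\<in>{0,1,2,3,4,5}. \<exists>k\<in>{0,1,2,3,4,5}. G k \<noteq> F ((k - s) mod 6))"

lemma mod_6_cases: "(r :: int) mod 6 \<in> {0,1,2,3,4,5}"
proof -
  have "0 \<le> r mod 6" "r mod 6 < 6" by auto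
  then show ?thesis by auto
qed

lemma not_rot_invariant_if_breaks_rot:
  assumes "breaks_rot F (j mod 6)" shows "\<not> rot_invariant F j"
proof
  assume inv: "rot_invariant F j"
  obtain k where k: "k \<in> {0,1,2,3,4,5}" "F ((k + j mod 6) mod 6) \<noteq> F k"
    using assms unfolding breaks_rot_def by blast
  have "F ((k + j) mod 6) = F (k mod 6)" using inv unfolding rot_invariant_def by blast
  moreover have "(k + j mod 6) mod 6 = (k + j) mod 6" by (rule mod_add_right_eq)
  moreover have "k mod 6 = k" using k(1) by auto
  ultimately show False using k(2) by simp
qed

lemma not_refl_invariant_if_breaks_refl:
  assumes "breaks_refl F (m mod 6)" shows "\<not> refl_invariant F m"
proof
  assume inv: "refl_invariant F m"
  obtain k where k: "k \<in> {0,1,2,3,4,5}" "F ((m mod 6 - k) mod 6) \<noteq> F k"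
    using assms unfolding breaks_refl_def by blast
  have "F ((m - k) mod 6) = F (k mod 6)" using inv unfolding refl_invariant_def by blast
  moreover have "(m mod 6 - k) mod 6 = (m - k) mod 6" by (rule mod_diff_left_eq)
  moreover have "k mod 6 = k" using k(1) by auto
  ultimately show False using k(2) by simp
qed

lemma not_rotation_related_if_not_rotation6:
  assumes "not_rotation6 F G" shows "\<not> rotation_related F G"
proof
  assume "rotation_related F G"
  then obtain s where s: "\<forall>k. G (k mod 6) = F ((k - s) mod 6)" unfolding rotation_related_def ..
  obtain k where k: "k \<in> {0,1,2,3,4,5}" "G k \<noteq> F ((k - s mod 6) mod 6)"
    using bspec[OF assms[unfolded not_rotation6_def] mod_6_cases[of s]] ..
  have "G (k mod 6) = F ((k - s) mod 6)" using s by blast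
  moreover have "(k - s mod 6) mod 6 = (k - s) mod 6" by (rule mod_diff_right_eq)
  moreover have "k mod 6 = k" using k(1) by auto
  ultimately show False using k(2) by simp
qed

lemma distinguishing_pattern_of_asymmetric:
  assumes periodic: "periodic_off_sixths p" and "fits_precoloring p F"
    and rot: "\<forall>j\<in>{1,2,3,4,5}. breaks_rot F j" and refl: "\<forall>m\<in>{0,1,2,3,4,5}. breaks_refl F m"
  shows "\<exists>F. fits_precoloring p F \<and> distinguishing (patched p F)"
proof -
  have "j mod 6 = 0" if inv: "rot_invariant F j" for j
  proof (rule ccontr)
    assume "j mod 6 \<noteq> 0"
    then have "j mod 6 \<in> {1,2,3,4,5}" using mod_6_cases[of j] by simp
    then have "breaks_rot F (j mod 6)" using rot by blast
    then show False using not_rot_invariant_if_breaks_rot inv by blast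
  qed
  moreover have "\<not> refl_invariant F m" for m
    using not_refl_invariant_if_breaks_refl bspec[OF refl mod_6_cases] by blast
  ultimately show ?thesis using distinguishing_if_periodic[OF periodic] assms(2) by blast
qed

text \<open>If $p$ is not periodic, its mirror axes $m/6$ among the sixths all have $m$ in one residue
  class modulo 6. So for any class $r$ it suffices to give three patterns breaking the reflection
  about $r$ (used when $p$ has a mirror in class $r$) and three breaking every other reflection
  (used when it has none).\<close>

lemma distinguishing_pattern_by_mirror_class:
  assumes p: "on_circle p" and not_periodic: "\<not> periodic_off_sixths p"
    and F: "fits_precoloring p Fa" "fits_precoloring p Fb" "fits_precoloring p Fc"
      "not_rotation6 Fa Fb" "not_rotation6 Fa Fc" "not_rotation6 Fb Fc"
      "\<forall>F\<in>{Fa, Fb, Fc}. breaks_refl F r"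
    and G: "fits_precoloring p Ga" "fits_precoloring p Gb" "fits_precoloring p Gc"
      "not_rotation6 Ga Gb" "not_rotation6 Ga Gc" "not_rotation6 Gb Gc"
      "\<forall>F\<in>{Ga, Gb, Gc}. \<forall>r'\<in>{0,1,2,3,4,5}. r' \<noteq> r \<longrightarrow> breaks_refl F r'"
  shows "\<exists>F. fits_precoloring p F \<and> distinguishing (patched p F)"
proof (cases "\<exists>m0. mirror_off_sixths p (of_int m0 / 6) \<and> m0 mod 6 = r")
  case True
  then obtain m0 where m0: "mirror_off_sixths p (of_int m0 / 6)" "m0 mod 6 = r" by blast
  show ?thesis
  proof (rule distinguishing_among_three[OF p not_periodic F(1-3)])
    show "\<not> rotation_related Fa Fb" "\<not> rotation_related Fa Fc" "\<not> rotation_related Fb Fc"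
      using F(4-6) by (simp_all add: not_rotation_related_if_not_rotation6)
    fix F m assume mem: "F \<in> {Fa, Fb, Fc}" and mirror: "mirror_off_sixths p (of_int m / 6)"
    have "breaks_refl F r" using F(7) mem ..
    moreover have "m mod 6 = r" using mirror_off_sixths_unique_mod_6[OF not_periodic mirror m0(1)] m0(2) by simp
    ultimately show "\<not> refl_invariant F m" using not_refl_invariant_if_breaks_refl by blast
  qed
next
  case False
  show ?thesis
  proof (rule distinguishing_among_three[OF p not_periodic G(1-3)])
    show "\<not> rotation_related Ga Gb" "\<not> rotation_related Ga Gc" "\<not> rotation_related Gb Gc"
      using G(4-6) by (simp_all add: not_rotation_related_if_not_rotation6)
    fix F m assume mem: "F \<in> {Ga, Gb, Gc}" and mirror: "mirror_off_sixths p (of_int m / 6)"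
    have "m mod 6 \<noteq> r" using False mirror by blast
    then show "\<not> refl_invariant F m"
      using bspec[OF bspec[OF G(7) mem] mod_6_cases[of m]] not_refl_invariant_if_breaks_refl by blast
  qed
qed

lemma two_colors_cases:
  obtains "p (1/6) = R" "p (5/6) = R" | "p (1/6) = R" "p (5/6) = B"
    | "p (1/6) = B" "p (5/6) = R" | "p (1/6) = B" "p (5/6) = B"
  by (cases "p (1/6)"; cases "p (5/6)") auto

lemma distinguishing_pattern_if_periodic:
  assumes periodic: "periodic_off_sixths p"
  shows "\<exists>F. fits_precoloring p F \<and> distinguishing (patched p F)"
proof -
  note by_pattern = distinguishing_pattern_of_asymmetric[OF periodic]
  note defs = fits_precoloring_def breaks_rot_def breaks_refl_def pattern6_def
  show ?thesis
  proof (cases rule: two_colors_cases[of p])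
    case 1
    show ?thesis by (rule by_pattern[where F = "pattern6 B R R B B R"]) (simp_all add: defs 1)
  next
    case 2
    show ?thesis by (rule by_pattern[where F = "pattern6 R R B R B B"]) (simp_all add: defs 2)
  next
    case 3
    show ?thesis by (rule by_pattern[where F = "pattern6 R B R B B R"]) (simp_all add: defs 3)
  next
    case 4
    show ?thesis by (rule by_pattern[where F = "pattern6 R B R R B B"]) (simp_all add: defs 4)
  qed
qed

lemma distinguishing_pattern_if_not_periodic:
  assumes p: "on_circle p" and not_periodic: "\<not> periodic_off_sixths p"
  shows "\<exists>F. fits_precoloring p F \<and> distinguishing (patched p F)"
proof -
  note by_class = distinguishing_pattern_by_mirror_class[OF p not_periodic]
  note defs = fits_precoloring_def not_rotation6_def breaks_refl_def pattern6_def
  show ?thesis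
  proof (cases rule: two_colors_cases[of p])
    case 1
    show ?thesis
      by (rule by_class[where r = 2
            and Fa = "pattern6 R R R B R R" and Fb = "pattern6 R R R B B R" and Fc = "pattern6 R R B R B R"
            and Ga = "pattern6 R R R R B R" and Gb = "pattern6 B R R B B R" and Gc = "pattern6 B R B R R R"])
        (simp_all add: defs 1)
  next
    case 2
    show ?thesis
      by (rule by_class[where r = 4
            and Fa = "pattern6 R R R R B B" and Fb = "pattern6 R R R B R B" and Fc = "pattern6 R R R B B B"
            and Ga = "pattern6 R R R R R B" and Gb = "pattern6 R R B R B B" and Gc = "pattern6 R R B B R B"])
        (simp_all add: defs 2)
  next
    case 3
    show ?thesis
      by (rule by_class[where r = 2
            and Fa = "pattern6 R B R B R R" and Fb = "pattern6 R B R B B R" and Fc = "pattern6 R B B R R R"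
            and Ga = "pattern6 R B R R R R" and Gb = "pattern6 R B R B B R" and Gc = "pattern6 R B B R B R"])
        (simp_all add: defs 3)
  next
    case 4
    show ?thesis
      by (rule by_class[where r = 0
            and Fa = "pattern6 R B R R B B" and Fb = "pattern6 R B R B B B" and Fc = "pattern6 R B B R R B"
            and Ga = "pattern6 R B R R R B" and Gb = "pattern6 R B R R B B" and Gc = "pattern6 R B B R R B"])
        (simp_all add: defs 4)
  qed
qed

theorem lemma2p3p8:
  shows "P {0, 1/3, 1/2, 2/3}"
  unfolding P_def
proof (intro conjI allI impI)
  show "trivial_pointwise_stabilizer {0, 1/3, 1/2, 2/3}" by (rule trivial_pointwise_stabilizer_W)
next
  fix p :: "real \<Rightarrow> color" assume p: "on_circle p"
  then obtain F where F: "fits_precoloring p F" "distinguishing (patched p F)"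
    using distinguishing_pattern_if_periodic distinguishing_pattern_if_not_periodic by blast
  have "on_circle (patched p F)" by (rule on_circle_patched[OF p])
  moreover have "patched p F x = p x" if "\<not> in_circle_set x {0, 1/3, 1/2, 2/3}" for x
    using patched_eq_off_W[OF p F(1) that] .
  ultimately show "\<exists>c. on_circle c \<and> distinguishing c \<and>
      (\<forall>x. \<not> in_circle_set x {0, 1/3, 1/2, 2/3} \<longrightarrow> c x = p x)"
    using F(2) by blast
qed

end
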